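(* Let $g\ge 2$ and let $C$ be a stable curve of compact type of genus $g$ with irreducible components $X_1,\dots,X_\gamma$, and let $X^{pr}$ be the principal component of $C$. Let $\underline e_1$ be the multidegree with $(e_1)_{X^{pr}}=1$ and $(e_1)_X=0$ for every irreducible component $X\ne X^{pr}$. Then: (i) $\underline e_1$ is the unique $X^{pr}$-quasistable multidegree of total degree $1$ on $C$; equivalently $J^{1,X^{pr}}_C=J^{\underline e_1}_C$; (ii) for every $q\in C$ the line bundle $\alpha^1_C(q)$ has multidegree $\underline e_1$, i.e. $\alpha^1_C$ factors through $J^{\underline e_1}_C\subset J^{1,ss}_C$.
   Context: All curves are connected, projective, reduced, nodal, over an algebraically closed field. $g_C=1-\chi(\mathcal O_C)$. Subcurve: union of irreducible components; $Y'$ is the closure of the complement of $Y$, $k_Y=\#(Y\cap Y')$. A tail is a subcurve $Z$ with $k_Z=1$. Compact type: every node is separating (the intersection of two tails $Z,Z'$, $Z\cap Z'=\{n\}$). Stable: every smooth rational component meets the rest in at least 3 points. For a line bundle $L$ on $C$ with components $X_1,\dots,X_\gamma$, its multidegree is $\underline d=(\deg L|_{X_1},\dots,\deg L|_{X_\gamma})$, total degree $d=\sum d_i$, and $d_Y:=\sum_{X_i\subseteq Y}d_i$. $J^{\underline d}_C$ is the locus of line bundles of multidegree $\underline d$; for $C$ of compact type, restriction gives $J^{\underline d}_C\cong\prod_i J^{d_i}_{X_i}$. $\omega_C$ is the dualizing sheaf, $\deg\omega_C|_Y=2g_Y-2+k_Y$. A multidegree $\underline d$ of total degree $d$ on $C$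 of genus $g\ge2$ is semistable if for every non-empty proper subcurve $Y$: $\left|d_Y-\frac{d}{2g-2}\deg\omega_C|_Y\right|\le \frac{k_Y}{2}$; for an irreducible component $X$, it is $X$-quasistable if it is semistable and moreover $d_Y-\frac{d}{2g-2}\deg\omega_C|_Y>-\frac{k_Y}{2}$ for every proper subcurve $Y\supseteq X$. $J^{1,ss}_C$ (resp. $J^{1,X}_C$) is the union of $J^{\underline d}_C$ over semistable (resp. $X$-quasistable) $\underline d$ of total degree 1. Central/semicentral: a component $X$ is central (resp. semicentral) if each connected component $Z$ of $X'$ has $g_Z<g_C/2$ (resp. $\le g_C/2$). A stable curve of compact type has either exactly one central component, or (exactly when some node is the intersection of two tails of genus $g/2$) no central component and exactly two semicentral ones, which meet. The principal component $X^{pr}$ is the central component in the first case, and a fixed choice of one of the two semicentral components in the second. A tail $Z$ is small if $g_Z<g_C/2$, or $g_Z=g_C/2$ and $X^{pr}\subseteq Z'$. For a tail $Z$ of a compact-type curve with $Z\cap Z'=\{n\}$, $\mathcal O_C(Z)$ is the line bundle with $\mathcal O_C(Z)|_Z\cong\mathcal O_Z(-n)$ and $\mathcal O_C(Z)|_{Z'}\cong\mathcal O_{Z'}(n)$ (equivalently $\mathcal O_{\mathcal C}(Z)|_C$ for any smoothing $\mathcal C$ of $C$). For $q\in C$, let $\mathcal N_q=\mathcal O_C(q)$ if $q$ is a smooth point, and if $q$ is a node with small tail $Z$ at $q$, let $\mathcal N_q$ be the line bundle with $\mathcal N_q|_Z=\mathcal O_Z(q)$, $\mathcal N_q|_{Z'}=\mathcal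 O_{Z'}$. The first Abel map of $C$ is $\alpha^1_C(q):=\mathcal N_q\otimes\bigotimes_{Z\text{ small tail},\,q\in Z}\mathcal O_C(Z)$. *)

theory Defs
  imports Complex_Main
begin

text \<open>
A nodal curve of compact type is modelled by its dual graph: the irreducible
components are the vertices V (a finite set), each node is an edge, i.e. a
two-element set of components, and gen v is the geometric genus of the
component v.  Points of C are recorded by where they lie: a smooth point
lying on component v, or a node.
\<close>

datatype 'v cpoint = Smooth 'v | NodeP "'v set"

definition is_graph :: "'v set \<Rightarrow> 'v set set \<Rightarrow> bool" where
  "is_graph V E \<longleftrightarrow> finite V \<and> V \<noteq> {} \<and> (\<forall>e\<in>E. e \<subseteq> V \<and> card e = 2)"

definition reach :: "'v set set \<Rightarrow> 'v set \<Rightarrow> 'v \<Rightarrow> 'v \<Rightarrow> bool" where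
  "reach F S a b \<longleftrightarrow>
     (a, b) \<in> ({(x, y). x \<in> S \<and> y \<in> S \<and> {x, y} \<in> F})\<^sup>*"

definition connected_sub :: "'v set set \<Rightarrow> 'v set \<Rightarrow> bool" where
  "connected_sub F S \<longleftrightarrow> (\<forall>a\<in>S. \<forall>b\<in>S. reach F S a b)"

definition conn_comps :: "'v set set \<Rightarrow> 'v set \<Rightarrow> 'v set set" where
  "conn_comps E S = {{b \<in> S. reach E S a b} | a. a \<in> S}"

definition compact_type :: "'v set \<Rightarrow> 'v set set \<Rightarrow> bool" where
  "compact_type V E \<longleftrightarrow> is_graph V E \<and> connected_sub E V \<and>
     (\<forall>e\<in>E. \<not> connected_sub (E - {e}) V)"

definition valence :: "'v set set \<Rightarrow> 'v \<Rightarrow> nat" where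
  "valence E v = card {e \<in> E. v \<in> e}"

definition stable :: "'v set \<Rightarrow> 'v set set \<Rightarrow> ('v \<Rightarrow> nat) \<Rightarrow> bool" where
  "stable V E gen \<longleftrightarrow> (\<forall>v\<in>V. gen v = 0 \<longrightarrow> valence E v \<ge> 3)"

definition crossing :: "'v set \<Rightarrow> 'v set set \<Rightarrow> 'v set \<Rightarrow> 'v set set" where
  "crossing V E Y = {e \<in> E. e \<inter> Y \<noteq> {} \<and> e \<inter> (V - Y) \<noteq> {}}"

definition kk :: "'v set \<Rightarrow> 'v set set \<Rightarrow> 'v set \<Rightarrow> int" where
  "kk V E Y = int (card (crossing V E Y))"

text \<open>arithmetic genus g_Y = 1 - chi(O_Y) = sum of g_i - #Y + #(nodes of Y) + 1\<close>
definition genus_sub :: "'v set set \<Rightarrow> ('v \<Rightarrow> nat) \<Rightarrow> 'v set \<Rightarrow> int" where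
  "genus_sub E gen Y = (\<Sum>v\<in>Y. int (gen v)) - int (card Y)
      + int (card {e \<in> E. e \<subseteq> Y}) + 1"

definition genusC :: "'v set \<Rightarrow> 'v set set \<Rightarrow> ('v \<Rightarrow> nat) \<Rightarrow> int" where
  "genusC V E gen = genus_sub E gen V"

definition deg_omega :: "'v set \<Rightarrow> 'v set set \<Rightarrow> ('v \<Rightarrow> nat) \<Rightarrow> 'v set \<Rightarrow> int" where
  "deg_omega V E gen Y = 2 * genus_sub E gen Y - 2 + kk V E Y"

definition subcurve :: "'v set \<Rightarrow> 'v set \<Rightarrow> bool" where
  "subcurve V Y \<longleftrightarrow> Y \<subseteq> V \<and> Y \<noteq> {} \<and> Y \<noteq> V"

definition degY :: "('v \<Rightarrow> int) \<Rightarrow> 'v set \<Rightarrow> int" where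
  "degY d Y = (\<Sum>v\<in>Y. d v)"

definition semistable :: "'v set \<Rightarrow> 'v set set \<Rightarrow> ('v \<Rightarrow> nat) \<Rightarrow> ('v \<Rightarrow> int) \<Rightarrow> bool" where
  "semistable V E gen d \<longleftrightarrow> (\<forall>Y. subcurve V Y \<longrightarrow>
     \<bar>real_of_int (degY d Y) - real_of_int (degY d V) / real_of_int (2 * genusC V E gen - 2)
        * real_of_int (deg_omega V E gen Y)\<bar> \<le> real_of_int (kk V E Y) / 2)"

definition quasistable ::
  "'v set \<Rightarrow> 'v set set \<Rightarrow> ('v \<Rightarrow> nat) \<Rightarrow> 'v \<Rightarrow> ('v \<Rightarrow> int) \<Rightarrow> bool" where
  "quasistable V E gen X d \<longleftrightarrow> semistable V E gen d \<and>
     (\<forall>Y. subcurve V Y \<and> X \<in> Y \<longrightarrow>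
        real_of_int (degY d Y) - real_of_int (degY d V) / real_of_int (2 * genusC V E gen - 2)
          * real_of_int (deg_omega V E gen Y) > - real_of_int (kk V E Y) / 2)"

definition central :: "'v set \<Rightarrow> 'v set set \<Rightarrow> ('v \<Rightarrow> nat) \<Rightarrow> 'v \<Rightarrow> bool" where
  "central V E gen X \<longleftrightarrow> X \<in> V \<and>
     (\<forall>Z \<in> conn_comps E (V - {X}). 2 * genus_sub E gen Z < genusC V E gen)"

definition semicentral :: "'v set \<Rightarrow> 'v set set \<Rightarrow> ('v \<Rightarrow> nat) \<Rightarrow> 'v \<Rightarrow> bool" where
  "semicentral V E gen X \<longleftrightarrow> X \<in> V \<and>
     (\<forall>Z \<in> conn_comps E (V - {X}). 2 * genus_sub E gen Z \<le> genusC V E gen)"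

text \<open>X is (a valid choice of) the principal component\<close>
definition principal :: "'v set \<Rightarrow> 'v set set \<Rightarrow> ('v \<Rightarrow> nat) \<Rightarrow> 'v \<Rightarrow> bool" where
  "principal V E gen X \<longleftrightarrow> central V E gen X \<or>
     ((\<nexists>Y. central V E gen Y) \<and> semicentral V E gen X)"

definition tail :: "'v set \<Rightarrow> 'v set set \<Rightarrow> 'v set \<Rightarrow> bool" where
  "tail V E Z \<longleftrightarrow> subcurve V Z \<and> kk V E Z = 1"

definition tail_node :: "'v set \<Rightarrow> 'v set set \<Rightarrow> 'v set \<Rightarrow> 'v set" where
  "tail_node V E Z = (THE n. crossing V E Z = {n})"

definition small_tail ::
  "'v set \<Rightarrow> 'v set set \<Rightarrow> ('v \<Rightarrow> nat) \<Rightarrow> 'v \<Rightarrow> 'v set \<Rightarrow> bool" where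
  "small_tail V E gen Xpr Z \<longleftrightarrow> tail V E Z \<and>
     (2 * genus_sub E gen Z < genusC V E gen \<or>
      (2 * genus_sub E gen Z = genusC V E gen \<and> Xpr \<in> V - Z))"

text \<open>multidegree of O_C(Z): degree -1 on the component of Z through n,
  +1 on the component of Z' through n, 0 elsewhere\<close>
definition OZ_deg :: "'v set \<Rightarrow> 'v set set \<Rightarrow> 'v set \<Rightarrow> 'v \<Rightarrow> int" where
  "OZ_deg V E Z X = (if X \<in> tail_node V E Z then (if X \<in> Z then -1 else 1) else 0)"

definition valid_point :: "'v set \<Rightarrow> 'v set set \<Rightarrow> 'v cpoint \<Rightarrow> bool" where
  "valid_point V E q = (case q of Smooth v \<Rightarrow> v \<in> V | NodeP e \<Rightarrow> e \<in> E)"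

definition point_on :: "'v cpoint \<Rightarrow> 'v set \<Rightarrow> bool" where
  "point_on q Z = (case q of Smooth v \<Rightarrow> v \<in> Z | NodeP e \<Rightarrow> e \<inter> Z \<noteq> {})"

text \<open>multidegree of N_q: O_C(q) for q smooth; for a node q with small tail Z
  at q, O_Z(q) on Z and trivial on Z'\<close>
definition N_deg ::
  "'v set \<Rightarrow> 'v set set \<Rightarrow> ('v \<Rightarrow> nat) \<Rightarrow> 'v \<Rightarrow> 'v cpoint \<Rightarrow> 'v \<Rightarrow> int" where
  "N_deg V E gen Xpr q X = (case q of
      Smooth v \<Rightarrow> (if X = v then 1 else 0)
    | NodeP e \<Rightarrow>
        (let Z = (THE Z. small_tail V E gen Xpr Z \<and> crossing V E Z = {e})
         in if X \<in> e \<and> X \<in> Z then 1 else 0))"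

definition abel1_deg ::
  "'v set \<Rightarrow> 'v set set \<Rightarrow> ('v \<Rightarrow> nat) \<Rightarrow> 'v \<Rightarrow> 'v cpoint \<Rightarrow> 'v \<Rightarrow> int" where
  "abel1_deg V E gen Xpr q X = N_deg V E gen Xpr q X +
     (\<Sum>Z \<in> {Z. small_tail V E gen Xpr Z \<and> point_on q Z}. OZ_deg V E Z X)"

end

theory Submission
  imports Defs
begin

text \<open>
  The dual graph of a curve of compact type is a tree; we root it
  at the principal component r.  Every node e cuts off a branch (the side of e
  not containing r), a tail meeting the rest of C exactly in e.  Two facts about
  branches drive everything.
  (a) The small tails are exactly the branches, and deg(omega) on a branch is
      at most g - 1 because r is semicentral; hence deg(omega) on any subcurve
      Y avoiding r is at most k_Y (g - 1).
  (b) Telescoping: summing the multidegrees of O_C(branch f) over the nodes f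
      separating a component w from r gives e_r - e_w (branch_telescope).
  By (b) every multidegree satisfies d = d(C) e_r - sum_f d(branch f) O_C(branch f)
  (degree_from_branches); quasistability in total degree 1 forces
  d(branch f) = 0, which gives uniqueness in (i).  By (a) the multidegree e_r
  is quasistable, completing (i); and (a) together with (b), applied at the
  point q, computes the multidegree of alpha^1(q), giving (ii).
\<close>

section \<open>Reachability in a subgraph\<close>

definition adj :: "'v set set \<Rightarrow> 'v set \<Rightarrow> ('v \<times> 'v) set" where
  "adj F S = {(x, y). x \<in> S \<and> y \<in> S \<and> {x, y} \<in> F}"

lemma reach_adj: "reach F S a b \<longleftrightarrow> (a, b) \<in> (adj F S)\<^sup>*"
  by (simp add: reach_def adj_def)

lemma reach_refl: "reach F S a a"
  by (simp add: reach_def)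

lemma reach_step: "reach F S a b \<Longrightarrow> b \<in> S \<Longrightarrow> c \<in> S \<Longrightarrow> {b, c} \<in> F \<Longrightarrow> reach F S a c"
  unfolding reach_adj by (erule rtrancl_into_rtrancl) (simp add: adj_def)

lemma reach_edge: "b \<in> S \<Longrightarrow> c \<in> S \<Longrightarrow> {b, c} \<in> F \<Longrightarrow> reach F S b c"
  using reach_step reach_refl by metis

lemma reach_trans: "reach F S a b \<Longrightarrow> reach F S b c \<Longrightarrow> reach F S a c"
  unfolding reach_adj by (rule rtrancl_trans)

lemma reach_sym: "reach F S a b \<Longrightarrow> reach F S b a"
proof -
  have "(adj F S)\<inverse> = adj F S" by (auto simp: adj_def insert_commute)
  then show "reach F S a b \<Longrightarrow> reach F S b a"
    unfolding reach_adj by (metis rtrancl_converseI)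
qed

lemma reach_in: "reach F S a b \<Longrightarrow> a \<in> S \<Longrightarrow> b \<in> S"
  unfolding reach_adj by (induction rule: rtrancl_induct) (auto simp: adj_def)

lemma reach_replace:
  assumes "reach F S a b"
    and "\<And>u v. u \<in> S \<Longrightarrow> v \<in> S \<Longrightarrow> {u, v} \<in> F \<Longrightarrow> reach F' S u v"
  shows "reach F' S a b"
  using assms(1) unfolding reach_adj
proof (induction rule: rtrancl_induct)
  case (step y z)
  then have "reach F' S y z" using assms(2) by (auto simp: adj_def)
  then show ?case using step.IH by (simp add: reach_adj)
qed simp

lemma reach_mono: "F \<subseteq> F' \<Longrightarrow> reach F S a b \<Longrightarrow> reach F' S a b"
  using reach_replace[of F S a b F'] by (auto intro: reach_edge)

lemma reach_mono_set: "S \<subseteq> S' \<Longrightarrow> reach F S a b \<Longrightarrow> reach F S' a b"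
  unfolding reach_adj by (erule rtrancl_mono[THEN subsetD, rotated]) (auto simp: adj_def)

lemma reach_prefix:
  assumes "reach F S a b"
  shows "reach (F - {e}) S a b \<or> (\<exists>x\<in>e. reach (F - {e}) S a x)"
  using assms unfolding reach_adj
proof (induction rule: rtrancl_induct)
  case (step y z)
  show ?case
  proof (cases "{y, z} = e")
    case True
    then show ?thesis using step by (auto simp: reach_adj[symmetric])
  next
    case False
    then have "(y, z) \<in> adj (F - {e}) S" using step by (auto simp: adj_def)
    then show ?thesis using step by (meson rtrancl_into_rtrancl)
  qed
qed simp

lemma reach_suffix:
  assumes "reach F S a b"
  shows "reach (F - {e}) S a b \<or> (\<exists>x\<in>e. reach (F - {e}) S x b)"
  using reach_prefix[OF reach_sym[OF assms], of e] reach_sym by metis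

lemma reach_exit:
  assumes "reach F S a b" "a \<in> A" "b \<notin> A"
  shows "\<exists>x y. x \<in> S \<and> y \<in> S \<and> {x, y} \<in> F \<and> x \<in> A \<and> y \<notin> A"
  using assms unfolding reach_adj
proof (induction rule: rtrancl_induct)
  case (step y z)
  then show ?case by (cases "y \<in> A") (auto simp: adj_def)
qed simp

lemma reach_restrict:
  assumes "reach F S a b" "a \<in> A" "A \<subseteq> S"
    and "\<And>x y. x \<in> A \<Longrightarrow> y \<in> S \<Longrightarrow> {x, y} \<in> F \<Longrightarrow> y \<in> A"
  shows "reach F A a b"
proof -
  have "reach F A a b \<and> b \<in> A"
    using assms(1) unfolding reach_adj
  proof (induction rule: rtrancl_induct)
    case (step y z)
    then have "z \<in> A" using assms(4) by (auto simp: adj_def)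
    then show ?case using step by (auto simp: adj_def intro: rtrancl_into_rtrancl)
  qed (use assms in simp)
  then show ?thesis ..
qed

section \<open>Curves of compact type: the dual graph is a tree\<close>

text \<open>The degree of omega_C on the component v.\<close>
definition omega_weight :: "'v set set \<Rightarrow> ('v \<Rightarrow> nat) \<Rightarrow> 'v \<Rightarrow> int" where
  "omega_weight E gen v = 2 * int (gen v) - 2 + int (valence E v)"

locale ct_graph =
  fixes V :: "'v set" and E :: "'v set set"
  assumes compact: "compact_type V E"
begin

lemma finite_V: "finite V"
  using compact by (simp add: compact_type_def is_graph_def)

lemma edge_subset: "e \<in> E \<Longrightarrow> e \<subseteq> V"
  using compact by (simp add: compact_type_def is_graph_def)

lemma finite_E: "finite E"
  using edge_subset finite_V by (metis Pow_iff finite_Pow_iff finite_subset subsetI)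

lemma finite_crossing: "finite (crossing V E Y)"
  using finite_E by (simp add: crossing_def)

lemma edge_pair: "e \<in> E \<Longrightarrow> \<exists>x y. e = {x, y} \<and> x \<noteq> y \<and> x \<in> V \<and> y \<in> V"
  using compact edge_subset
  by (metis card_2_iff compact_type_def insert_subset is_graph_def)

lemma edge_eq: "e \<in> E \<Longrightarrow> a \<in> e \<Longrightarrow> b \<in> e \<Longrightarrow> a \<noteq> b \<Longrightarrow> e = {a, b}"
  using edge_pair by blast

lemma connected: "a \<in> V \<Longrightarrow> b \<in> V \<Longrightarrow> reach E V a b"
  using compact by (simp add: compact_type_def connected_sub_def)

lemma node_separates:
  assumes e: "e \<in> E" "x \<in> e" "y \<in> e" "x \<noteq> y" and path: "reach (E - {e}) V x y"
  shows False
proof -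
  have exy: "e = {x, y}" using edge_eq e by blast
  have "connected_sub (E - {e}) V"
    unfolding connected_sub_def
  proof (intro ballI)
    fix a b assume "a \<in> V" "b \<in> V"
    then have "reach E V a b" by (rule connected)
    then show "reach (E - {e}) V a b"
    proof (rule reach_replace)
      fix u v assume uv: "u \<in> V" "v \<in> V" "{u, v} \<in> E"
      show "reach (E - {e}) V u v"
      proof (cases "{u, v} = e")
        case True
        then have "(u = x \<and> v = y) \<or> (u = y \<and> v = x)" using exy by (metis doubleton_eq_iff)
        then show ?thesis using path reach_sym[OF path] by auto
      next
        case False
        then show ?thesis using uv by (auto intro: reach_edge)
      qed
    qed
  qed
  then show False using compact e(1) by (simp add: compact_type_def)
qed

lemma crossing_compl: "Y \<subseteq> V \<Longrightarrow> crossing V E (V - Y) = crossing V E Y"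
  using edge_subset by (auto simp: crossing_def)

lemma tail_closed:
  assumes cr: "crossing V E Z = {e}" and path: "reach (E - {e}) V a b" and a: "a \<in> Z"
  shows "b \<in> Z"
proof (rule ccontr)
  assume "b \<notin> Z"
  from reach_exit[OF path a this] obtain x y where
    "x \<in> V" "y \<in> V" "{x, y} \<in> E - {e}" "x \<in> Z" "y \<notin> Z" by blast
  then have "{x, y} \<in> crossing V E Z" "{x, y} \<noteq> e" by (auto simp: crossing_def)
  then show False using cr by auto
qed

text \<open>A proper subcurve of a connected curve meets its complement.\<close>
lemma kk_pos:
  assumes Y: "subcurve V Y" shows "1 \<le> kk V E Y"
proof -
  obtain a b where ab: "a \<in> Y" "b \<in> V" "b \<notin> Y" and "a \<in> V"
    using Y by (auto simp: subcurve_def)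
  then obtain x y where "x \<in> V" "y \<in> V" "{x, y} \<in> E" "x \<in> Y" "y \<notin> Y"
    using reach_exit[OF connected] by metis
  then have "{x, y} \<in> crossing V E Y" by (auto simp: crossing_def)
  then have "card (crossing V E Y) \<noteq> 0" using finite_crossing by auto
  then show ?thesis by (simp add: kk_def)
qed

lemma component_boundary_node:
  assumes W: "W \<in> conn_comps E (V - {v})" and g: "g \<in> crossing V E W"
  shows "\<exists>a\<in>W. g = {a, v}"
proof -
  obtain x where W_eq: "W = {b \<in> V - {v}. reach E (V - {v}) x b}"
    using W by (auto simp: conn_comps_def)
  obtain a b where ab: "a \<in> g" "a \<in> W" "b \<in> g" "b \<in> V" "b \<notin> W" and gE: "g \<in> E"
    using g by (auto simp: crossing_def)
  have "b = v"
  proof (rule ccontr)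
    assume "b \<noteq> v"
    then have "reach E (V - {v}) x b"
      using ab gE edge_eq[OF gE] reach_step[of E "V - {v}" x a b] by (auto simp: W_eq)
    then show False using ab \<open>b \<noteq> v\<close> by (auto simp: W_eq)
  qed
  then show ?thesis using ab gE edge_eq by blast
qed

text \<open>In a tree, a connected component of the complement of a vertex v is
  attached to v by a single node: two such nodes would close a cycle.\<close>
lemma component_attached_once:
  assumes v: "v \<in> V" and W: "W \<in> conn_comps E (V - {v})"
  shows "card (crossing V E W) \<le> 1"
proof -
  obtain x where W_eq: "W = {b \<in> V - {v}. reach E (V - {v}) x b}"
    using W by (auto simp: conn_comps_def)
  have "g1 = g2" if g: "g1 \<in> crossing V E W" "g2 \<in> crossing V E W" for g1 g2
  proof (rule ccontr)
    assume ne: "g1 \<noteq> g2"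
    obtain a1 a2 where a: "a1 \<in> W" "g1 = {a1, v}" "a2 \<in> W" "g2 = {a2, v}"
      using component_boundary_node[OF W] g by metis
    have gE: "g1 \<in> E" "g2 \<in> E" using g by (auto simp: crossing_def)
    have "reach E (V - {v}) a1 a2"
      using a reach_trans reach_sym by (metis (no_types, lifting) W_eq mem_Collect_eq)
    then have "reach (E - {g1}) (V - {v}) a1 a2"
    proof (rule reach_replace)
      fix u w assume "u \<in> V - {v}" "w \<in> V - {v}" "{u, w} \<in> E"
      moreover have "{u, w} \<noteq> g1" using a calculation by auto
      ultimately show "reach (E - {g1}) (V - {v}) u w" by (auto intro: reach_edge)
    qed
    then have "reach (E - {g1}) V a1 a2" by (rule reach_mono_set[rotated]) auto
    moreover have "reach (E - {g1}) V a2 v"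
      using reach_edge[of a2 V v "E - {g1}"] a gE ne v by (auto simp: W_eq)
    ultimately have "reach (E - {g1}) V a1 v" by (rule reach_trans)
    moreover have "a1 \<noteq> v" using a by (auto simp: W_eq)
    ultimately show False using node_separates[OF gE(1)] a by auto
  qed
  then show ?thesis using finite_crossing by (simp add: card_le_Suc0_iff_eq)
qed

lemma card_edge_inter:
  assumes e: "e \<in> E" and Y: "Y \<subseteq> V"
  shows "card (Y \<inter> e) = (if e \<subseteq> Y then 2 else 0) + (if e \<in> crossing V E Y then 1 else 0)"
proof -
  obtain a b where "e = {a, b}" "a \<noteq> b" "a \<in> V" "b \<in> V" using edge_pair[OF e] by blast
  then show ?thesis using e by (cases "a \<in> Y"; cases "b \<in> Y") (auto simp: crossing_def)
qed

text \<open>Handshake lemma for a subcurve: valences count inner nodes twice.\<close>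
lemma valence_sum:
  assumes Y: "Y \<subseteq> V"
  shows "(\<Sum>v\<in>Y. valence E v) = 2 * card {e\<in>E. e \<subseteq> Y} + card (crossing V E Y)"
proof -
  have finY: "finite Y" using Y finite_V finite_subset by blast
  have "(\<Sum>v\<in>Y. valence E v) = (\<Sum>v\<in>Y. \<Sum>e\<in>E. if v \<in> e then 1 else 0)"
    by (rule sum.cong) (auto simp: valence_def sum.inter_filter[OF finite_E, symmetric])
  also have "\<dots> = (\<Sum>e\<in>E. \<Sum>v\<in>Y. if v \<in> e then 1 else 0)" by (rule sum.swap)
  also have "\<dots> = (\<Sum>e\<in>E. card (Y \<inter> e))"
    by (rule sum.cong) (auto simp: sum.inter_filter[OF finY, symmetric] Int_def)
  also have "\<dots> = (\<Sum>e\<in>E. (if e \<subseteq> Y then 2 else 0) + (if e \<in> crossing V E Y then 1 else 0))"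
    by (rule sum.cong) (auto simp: card_edge_inter Y)
  also have "\<dots> = 2 * card {e\<in>E. e \<subseteq> Y} + card {e\<in>E. e \<in> crossing V E Y}"
    by (simp add: sum.distrib sum.inter_filter[OF finite_E, symmetric])
  also have "{e\<in>E. e \<in> crossing V E Y} = crossing V E Y" by (auto simp: crossing_def)
  finally show ?thesis .
qed

lemma deg_omega_sum:
  assumes Y: "Y \<subseteq> V"
  shows "deg_omega V E gen Y = (\<Sum>v\<in>Y. omega_weight E gen v)"
proof -
  have "(\<Sum>v\<in>Y. omega_weight E gen v)
      = 2 * (\<Sum>v\<in>Y. int (gen v)) - 2 * int (card Y) + int (\<Sum>v\<in>Y. valence E v)"
    by (simp add: omega_weight_def sum.distrib sum_subtractf sum_distrib_left)
  then show ?thesis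
    by (simp add: valence_sum[OF Y] deg_omega_def genus_sub_def kk_def)
qed

lemma deg_omega_compl:
  assumes "Y \<subseteq> V"
  shows "deg_omega V E gen (V - Y) = 2 * genusC V E gen - 2 - deg_omega V E gen Y"
proof -
  have "deg_omega V E gen V = 2 * genusC V E gen - 2"
    by (simp add: deg_omega_def genusC_def kk_def crossing_def)
  then show ?thesis
    using assms deg_omega_sum[of Y] deg_omega_sum[of "V - Y"] deg_omega_sum[of V]
      sum.subset_diff[OF assms finite_V, of "omega_weight E gen"] by simp
qed

text \<open>On a stable curve omega_C has nonnegative degree on every component
  (a rational component has valence at least 3), so deg omega is nonnegative
  and monotone in the subcurve.\<close>
lemma omega_weight_nonneg: "stable V E gen \<Longrightarrow> v \<in> V \<Longrightarrow> 0 \<le> omega_weight E gen v"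
  unfolding stable_def omega_weight_def by (cases "gen v = 0") auto

lemma deg_omega_nonneg: "stable V E gen \<Longrightarrow> Y \<subseteq> V \<Longrightarrow> 0 \<le> deg_omega V E gen Y"
  using omega_weight_nonneg by (auto simp: deg_omega_sum intro!: sum_nonneg)

lemma deg_omega_mono:
  assumes "stable V E gen" "A \<subseteq> B" "B \<subseteq> V"
  shows "deg_omega V E gen A \<le> deg_omega V E gen B"
proof -
  have "finite B" using assms finite_V finite_subset by blast
  then have "(\<Sum>v\<in>A. omega_weight E gen v) \<le> (\<Sum>v\<in>B. omega_weight E gen v)"
    by (rule sum_mono2) (use assms omega_weight_nonneg in auto)
  then show ?thesis using assms by (simp add: deg_omega_sum)
qed

end

section \<open>Rooted trees and branches\<close>

locale rooted_ct = ct_graph V E for V :: "'v set" and E +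
  fixes r :: 'v
  assumes root_in: "r \<in> V"
begin

definition branch :: "'v set \<Rightarrow> 'v set" where
  "branch e = {w \<in> V. \<not> reach (E - {e}) V w r}"

lemma root_not_in_branch: "r \<notin> branch e"
  by (simp add: branch_def reach_refl)

lemma branch_subset: "branch e \<subseteq> V"
  by (auto simp: branch_def)

lemma not_in_branch: "y \<in> V \<Longrightarrow> y \<notin> branch e \<Longrightarrow> reach (E - {e}) V y r"
  by (simp add: branch_def)

lemma branch_closed:
  assumes "a \<in> branch e" "reach (E - {e}) V a b"
  shows "b \<in> branch e"
proof -
  have "a \<in> V" using assms(1) by (simp add: branch_def)
  then have "b \<in> V" using reach_in[OF assms(2)] by simp
  moreover have "\<not> reach (E - {e}) V b r"
    using assms reach_trans[OF assms(2)] by (auto simp: branch_def)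
  ultimately show ?thesis by (simp add: branch_def)
qed

lemma branch_closed_edge:
  assumes "a \<in> branch e" "{a, b} \<in> E" "{a, b} \<noteq> e"
  shows "b \<in> branch e"
proof -
  have "a \<in> V" "b \<in> V" using assms branch_subset edge_subset by auto
  then have "reach (E - {e}) V a b" using assms by (auto intro: reach_edge)
  then show ?thesis by (rule branch_closed[OF assms(1)])
qed

text \<open>Exactly one endpoint of e (its lower end) lies in the branch of e.\<close>
lemma branch_node:
  assumes e: "e \<in> E"
  shows "\<exists>x y. e = {x, y} \<and> x \<noteq> y \<and> x \<in> branch e \<and> y \<in> V \<and> y \<notin> branch e"
proof -
  obtain a b where ab: "e = {a, b}" "a \<noteq> b" "a \<in> V" "b \<in> V" using edge_pair[OF e] by blast
  have not_both_out: "\<not> (a \<notin> branch e \<and> b \<notin> branch e)"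
  proof
    assume "a \<notin> branch e \<and> b \<notin> branch e"
    then have "reach (E - {e}) V a r" "reach (E - {e}) V b r"
      using ab not_in_branch by auto
    then have "reach (E - {e}) V a r" "reach (E - {e}) V r b"
      using reach_sym by auto
    then have "reach (E - {e}) V a b" by (rule reach_trans)
    then show False using node_separates[OF e] ab by auto
  qed
  have one_out: "a \<notin> branch e \<or> b \<notin> branch e"
    using reach_suffix[OF connected[OF ab(3) root_in], of e] ab by (auto simp: branch_def)
  show ?thesis
  proof (cases "a \<in> branch e")
    case True
    then show ?thesis using one_out ab by blast
  next
    case False
    then show ?thesis using not_both_out ab by (metis insert_commute)
  qed
qed

lemma branch_nonempty: "e \<in> E \<Longrightarrow> branch e \<noteq> {}"
  using branch_node by blast

lemma branch_lower_unique:
  "e \<in> E \<Longrightarrow> x \<in> e \<Longrightarrow> x \<in> branch e \<Longrightarrow> x' \<in> e \<Longrightarrow> x' \<in> branch e \<Longrightarrow> x = x'"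
  using branch_node by blast

lemma crossing_branch:
  assumes e: "e \<in> E"
  shows "crossing V E (branch e) = {e}"
proof
  show "{e} \<subseteq> crossing V E (branch e)"
    using branch_node[OF e] e by (auto simp: crossing_def)
  show "crossing V E (branch e) \<subseteq> {e}"
  proof
    fix f assume f: "f \<in> crossing V E (branch e)"
    then obtain a b where ab: "a \<in> f" "a \<in> branch e" "b \<in> f" "b \<notin> branch e" and fE: "f \<in> E"
      by (auto simp: crossing_def)
    then have "f = {a, b}" using edge_eq by blast
    then show "f \<in> {e}" using branch_closed_edge[of a e b] ab fE by auto
  qed
qed

lemma branch_inj: "e \<in> E \<Longrightarrow> f \<in> E \<Longrightarrow> branch e = branch f \<Longrightarrow> e = f"
  using crossing_branch by (metis singleton_inject)

lemma branch_subcurve: "e \<in> E \<Longrightarrow> subcurve V (branch e)"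
  using branch_subset[of e] branch_nonempty[of e] root_not_in_branch[of e] root_in
  by (auto simp: subcurve_def)

lemma branch_compl_subcurve: "e \<in> E \<Longrightarrow> subcurve V (V - branch e)"
  using branch_subset[of e] branch_nonempty[of e] root_not_in_branch[of e] root_in
  by (auto simp: subcurve_def)

lemma branch_reach_lower:
  assumes e: "e \<in> E" and x: "x \<in> e" "x \<in> branch e" and y: "y \<in> branch e"
  shows "reach (E - {e}) V y x"
proof -
  have "reach E V y r" using connected y branch_subset root_in by auto
  from reach_prefix[OF this, of e] show ?thesis
  proof
    assume "\<exists>z\<in>e. reach (E - {e}) V y z"
    then obtain z where z: "z \<in> e" "reach (E - {e}) V y z" by blast
    moreover have "z \<in> branch e" using branch_closed[OF y z(2)] .
    ultimately have "z = x" using branch_lower_unique[OF e _ _ x] by blast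
    then show ?thesis using z by simp
  qed (use y in \<open>simp add: branch_def\<close>)
qed

lemma branch_connected:
  assumes e: "e \<in> E" and x: "x \<in> e" "x \<in> branch e" and y: "y \<in> branch e"
  shows "reach E (V - {r}) x y"
proof -
  have "reach (E - {e}) (branch e) y x"
  proof (rule reach_restrict[OF branch_reach_lower[OF e x y] y branch_subset])
    fix a b assume "a \<in> branch e" "b \<in> V" "{a, b} \<in> E - {e}"
    then show "b \<in> branch e" using branch_closed_edge[of a e b] by auto
  qed
  then have "reach E (branch e) y x" by (rule reach_mono[rotated]) auto
  moreover have "branch e \<subseteq> V - {r}" using branch_subset root_not_in_branch by blast
  ultimately have "reach E (V - {r}) y x" by (rule reach_mono_set[rotated])
  then show ?thesis by (rule reach_sym)
qed

lemma cut_off_in_branch: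
  assumes "finite C"
  shows "C \<subseteq> E \<Longrightarrow> v \<in> V \<Longrightarrow> \<not> reach (E - C) V v r \<Longrightarrow> \<exists>f\<in>C. v \<in> branch f"
  using assms
proof (induction C rule: finite_induct)
  case empty
  then show ?case using connected root_in by auto
next
  case (insert f C0)
  show ?case
  proof (rule ccontr)
    assume none: "\<not> (\<exists>f'\<in>insert f C0. v \<in> branch f')"
    then have v_f: "reach (E - {f}) V v r" using insert.prems by (simp add: branch_def)
    have v_C0: "reach (E - C0) V v r" using insert none by auto
    have fE: "f \<in> E" using insert.prems by auto
    have sub: "E - C0 - {f} \<subseteq> E - {f}" by auto
    have "reach (E - C0 - {f}) V v r"
    proof -
      note pre = reach_prefix[OF v_C0, of f] and suf = reach_suffix[OF v_C0, of f]
      show ?thesis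
      proof (rule ccontr)
        assume broken: "\<not> reach (E - C0 - {f}) V v r"
        then obtain x y where x: "x \<in> f" "reach (E - C0 - {f}) V v x"
          and y: "y \<in> f" "reach (E - C0 - {f}) V y r"
          using pre suf by blast
        have "x \<noteq> y"
        proof
          assume "x = y"
          then show False using broken reach_trans[OF x(2)] y(2) by simp
        qed
        have "reach (E - {f}) V x v" "reach (E - {f}) V r y"
          using reach_sym[OF reach_mono[OF sub x(2)]] reach_sym[OF reach_mono[OF sub y(2)]] .
        then have "reach (E - {f}) V x y" using reach_trans[OF _ reach_trans[OF v_f]] by blast
        then show False using node_separates[OF fE x(1) y(1) \<open>x \<noteq> y\<close>] by blast
      qed
    qed
    moreover have "E - insert f C0 = E - C0 - {f}" by auto
    ultimately show False using insert.prems by simp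
  qed
qed

lemma branch_cover:
  assumes "Y \<subseteq> V" "r \<notin> Y" "v \<in> Y"
  shows "\<exists>f\<in>crossing V E Y. v \<in> branch f"
proof (rule cut_off_in_branch)
  show "\<not> reach (E - crossing V E Y) V v r"
  proof
    assume "reach (E - crossing V E Y) V v r"
    from reach_exit[OF this, of Y] assms obtain x y where
      "x \<in> V" "y \<in> V" "{x, y} \<in> E - crossing V E Y" "x \<in> Y" "y \<notin> Y" by auto
    then show False by (auto simp: crossing_def)
  qed
qed (use assms finite_crossing in \<open>auto simp: crossing_def\<close>)

lemma branch_mono:
  assumes f: "f \<in> E" and sub: "f \<subseteq> branch e"
  shows "branch f \<subseteq> branch e"
proof
  fix y assume y: "y \<in> branch f"
  show "y \<in> branch e"
  proof (rule ccontr)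
    assume "y \<notin> branch e"
    then have "reach (E - {e}) V y r" using not_in_branch y branch_subset by auto
    from reach_suffix[OF this, of f] show False
    proof
      assume "reach (E - {e} - {f}) V y r"
      then have "reach (E - {f}) V y r" using reach_mono[of "E - {e} - {f}" "E - {f}"] by auto
      then show False using y by (simp add: branch_def)
    next
      assume "\<exists>x\<in>f. reach (E - {e} - {f}) V x r"
      then obtain x where "x \<in> f" "reach (E - {e} - {f}) V x r" by blast
      then show False
        using reach_mono[of "E - {e} - {f}" "E - {e}"] sub by (auto simp: branch_def)
    qed
  qed
qed

lemma node_inside_or_outside:
  assumes e: "e \<in> E" and f: "f \<in> E" "f \<noteq> e"
  shows "f \<subseteq> branch e \<or> f \<inter> branch e = {}"
proof -
  have "f \<notin> crossing V E (branch e)" using crossing_branch e f by auto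
  then show ?thesis using edge_subset[OF f(1)] f by (auto simp: crossing_def)
qed

text \<open>If neither of two nodes lies in the branch of the other, their branches
  are disjoint: the way up from a common w to the root first leaves through e
  or f, and then reaches the root avoiding the other node.\<close>
lemma branches_disjoint:
  assumes e: "e \<in> E" and f: "f \<in> E"
    and f_out: "f \<inter> branch e = {}" and e_out: "e \<inter> branch f = {}"
    and w: "w \<in> branch e" "w \<in> branch f"
  shows False
proof -
  have "reach E V w r" using connected w branch_subset root_in by auto
  from reach_prefix[OF this, of e] obtain x where x: "x \<in> e" "reach (E - {e}) V w x"
    using w by (auto simp: branch_def)
  from reach_prefix[OF x(2), of f] show False
  proof
    assume "reach (E - {e} - {f}) V w x"
    then have "reach (E - {f}) V w x" using reach_mono[of "E - {e} - {f}" "E - {f}"] by auto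
    moreover have "reach (E - {f}) V x r" using not_in_branch e_out x edge_subset[OF e] by auto
    ultimately have "reach (E - {f}) V w r" by (rule reach_trans)
    then show False using w by (simp add: branch_def)
  next
    assume "\<exists>y\<in>f. reach (E - {e} - {f}) V w y"
    then obtain y where y: "y \<in> f" "reach (E - {e} - {f}) V w y" by blast
    then have "reach (E - {e}) V w y" using reach_mono[of "E - {e} - {f}" "E - {e}"] by auto
    moreover have "reach (E - {e}) V y r"
      using not_in_branch[of y e] f_out y(1) edge_subset[OF f] by auto
    ultimately have "reach (E - {e}) V w r" by (rule reach_trans)
    then show False using w by (simp add: branch_def)
  qed
qed

lemma branches_laminar:
  assumes e: "e \<in> E" and f: "f \<in> E" and w: "w \<in> branch e" "w \<in> branch f"
  shows "branch e \<subseteq> branch f \<or> branch f \<subseteq> branch e"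
proof (cases "e = f")
  case False
  then consider "f \<subseteq> branch e" | "e \<subseteq> branch f" | "f \<inter> branch e = {}" "e \<inter> branch f = {}"
    using node_inside_or_outside[OF e f] node_inside_or_outside[OF f e] by blast
  then show ?thesis
  proof cases
    case 1
    then show ?thesis using branch_mono[OF f] by blast
  next
    case 2
    then show ?thesis using branch_mono[OF e] by blast
  next
    case 3
    then show ?thesis using branches_disjoint[OF e f _ _ w] by blast
  qed
qed simp

lemma parent_exists: "X \<in> V \<Longrightarrow> X \<noteq> r \<Longrightarrow> \<exists>u\<in>E. X \<in> u \<and> X \<in> branch u"
  using branch_cover[of "{X}" X] by (auto simp: crossing_def)

lemma parent_unique:
  assumes f: "f1 \<in> E" "f2 \<in> E" "X \<in> f1" "X \<in> f2" "X \<in> branch f1" "X \<in> branch f2"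
  shows "f1 = f2"
proof (rule ccontr)
  assume ne: "f1 \<noteq> f2"
  obtain y1 where y1: "f1 = {X, y1}" "y1 \<in> V" "y1 \<notin> branch f1"
    using branch_node[OF f(1)] f(3,5) by blast
  have XV: "X \<in> V" using f branch_subset by auto
  from reach_suffix[OF not_in_branch[OF y1(2,3)], of f2] show False
  proof
    assume "reach (E - {f1} - {f2}) V y1 r"
    then have y1r: "reach (E - {f2}) V y1 r" using reach_mono[of "E - {f1} - {f2}" "E - {f2}"] by auto
    have "reach (E - {f2}) V X y1"
      using reach_edge[of X V y1 "E - {f2}"] XV y1 f ne by auto
    then have "reach (E - {f2}) V X r" using y1r by (rule reach_trans)
    then show False using f(6) by (simp add: branch_def)
  next
    assume "\<exists>z\<in>f2. reach (E - {f1} - {f2}) V z r"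
    then obtain z where z: "z \<in> f2" "reach (E - {f1} - {f2}) V z r" by blast
    then have zr: "reach (E - {f1}) V z r" using reach_mono[of "E - {f1} - {f2}" "E - {f1}"] by auto
    have "reach (E - {f1}) V X z"
    proof (cases "z = X")
      case False
      then have "f2 = {X, z}" using edge_eq f z by blast
      then show ?thesis using reach_edge[of X V z "E - {f1}"] XV edge_subset f ne by auto
    qed (simp add: reach_refl)
    then have "reach (E - {f1}) V X r" using zr by (rule reach_trans)
    then show False using f(5) by (simp add: branch_def)
  qed
qed

definition below :: "'v \<Rightarrow> 'v \<Rightarrow> bool" where
  "below w X \<longleftrightarrow> X = r \<or> (\<exists>u\<in>E. X \<in> u \<and> X \<in> branch u \<and> w \<in> branch u)"

lemma below_refl: "w \<in> V \<Longrightarrow> below w w"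
  using parent_exists by (auto simp: below_def)

lemma child_unique:
  assumes f: "f1 \<in> E" "f2 \<in> E" "X \<in> f1" "X \<in> f2" "X \<notin> branch f1" "X \<notin> branch f2"
    and w: "w \<in> branch f1" "w \<in> branch f2"
  shows "f1 = f2"
proof -
  have XV: "X \<in> V" using f edge_subset by auto
  have inside: "f1 = f2" if "branch f1 \<subseteq> branch f2" "f1 \<in> E" "f2 \<in> E" "X \<in> f1"
    "X \<notin> branch f2" for f1 f2
  proof -
    obtain x where "x \<in> f1" "x \<in> branch f1" using branch_node[OF \<open>f1 \<in> E\<close>] by blast
    then have "f1 \<in> crossing V E (branch f2)" using that XV by (auto simp: crossing_def)
    then show ?thesis using crossing_branch \<open>f2 \<in> E\<close> by auto
  qed
  show ?thesis using branches_laminar[OF f(1,2) w] inside f by metis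
qed

lemma child_below:
  assumes f: "f \<in> E" "X \<in> f" "X \<notin> branch f" "w \<in> branch f"
  shows "below w X"
proof (cases "X = r")
  case False
  then obtain u where u: "u \<in> E" "X \<in> u" "X \<in> branch u"
    using parent_exists f edge_subset by blast
  obtain x where x: "f = {x, X}" "x \<in> branch f" using branch_node[OF f(1)] f(2,3) by blast
  have "x \<in> branch u"
    using branch_closed_edge[of X u x] u f x by (auto simp: insert_commute)
  then have "branch f \<subseteq> branch u" using branch_mono f(1) u x by auto
  then show ?thesis using u f by (auto simp: below_def)
qed (simp add: below_def)

text \<open>A path avoiding the component X cannot use a node u through X, so it
  stays inside the branch of u it starts in.\<close>
lemma path_avoiding_endpoint:
  assumes u: "u \<in> E" "X \<in> u" "w \<in> branch u" and path: "reach E (V - {X}) w y"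
  shows "y \<in> branch u"
proof -
  have "reach (E - {u}) (V - {X}) w y"
    using path
  proof (rule reach_replace)
    fix a b assume "a \<in> V - {X}" "b \<in> V - {X}" "{a, b} \<in> E"
    moreover have "{a, b} \<noteq> u" using u calculation by auto
    ultimately show "reach (E - {u}) (V - {X}) a b" by (auto intro: reach_edge)
  qed
  then have "reach (E - {u}) V w y" by (rule reach_mono_set[rotated]) auto
  then show "y \<in> branch u" by (rule branch_closed[OF u(3)])
qed

text \<open>Conversely, if w \<noteq> X lies below X, the first node on the way from X
  down to w is a child node of X whose branch contains w.\<close>
lemma child_exists:
  assumes XV: "X \<in> V" and wV: "w \<in> V" and wX: "w \<noteq> X" and below: "below w X"
  shows "\<exists>f\<in>E. X \<in> f \<and> X \<notin> branch f \<and> w \<in> branch f"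
proof -
  define Y where "Y = {y \<in> V - {X}. reach E (V - {X}) w y}"
  have wY: "w \<in> Y" using wV wX by (simp add: Y_def reach_refl)
  have Y_in_parent: "Y \<subseteq> branch u"
    if u: "u \<in> E" "X \<in> u" "w \<in> branch u" for u
    using path_avoiding_endpoint[OF u] by (auto simp: Y_def)
  have "r \<notin> Y"
  proof (cases "X = r")
    case False
    then obtain u where "u \<in> E" "X \<in> u" "w \<in> branch u" using below by (auto simp: below_def)
    then show ?thesis using Y_in_parent root_not_in_branch by blast
  qed (simp add: Y_def)
  then obtain f where f: "f \<in> crossing V E Y" "w \<in> branch f"
    using branch_cover[OF _ _ wY] by (auto simp: Y_def)
  obtain a b where ab: "a \<in> f" "a \<in> Y" "b \<in> f" "b \<in> V" "b \<notin> Y" and fE: "f \<in> E"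
    using f(1) by (auto simp: crossing_def)
  have fab: "f = {a, b}" using edge_eq fE ab by auto
  have bX: "b = X"
  proof (rule ccontr)
    assume "b \<noteq> X"
    then have "reach E (V - {X}) w b"
      using ab reach_step[of E "V - {X}" w a b] fab fE by (auto simp: Y_def)
    then show False using ab \<open>b \<noteq> X\<close> by (auto simp: Y_def)
  qed
  have "X \<notin> branch f"
  proof
    assume XS: "X \<in> branch f"
    then have "X \<noteq> r" using root_not_in_branch by auto
    then obtain u where u: "u \<in> E" "X \<in> u" "X \<in> branch u" "w \<in> branch u"
      using below by (auto simp: below_def)
    have "f = u" using parent_unique[OF fE u(1)] XS u ab bX by auto
    moreover have "a \<in> branch u" "a \<noteq> X" using Y_in_parent[OF u(1,2,4)] ab by (auto simp: Y_def)
    ultimately show False using branch_lower_unique[OF u(1) _ _ u(2) u(3)] ab by auto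
  qed
  then show ?thesis using fE ab bX f by auto
qed

lemma card_lower_ends:
  assumes XV: "X \<in> V"
  shows "card {f\<in>E. w \<in> branch f \<and> X \<in> f \<and> X \<in> branch f} = (if X \<noteq> r \<and> below w X then 1 else 0)"
proof (cases "X = r")
  case False
  then obtain u where u: "u \<in> E" "X \<in> u" "X \<in> branch u" using parent_exists XV by blast
  then have "{f\<in>E. w \<in> branch f \<and> X \<in> f \<and> X \<in> branch f} = (if w \<in> branch u then {u} else {})"
    using parent_unique by auto
  moreover have "below w X \<longleftrightarrow> w \<in> branch u"
    using False u parent_unique by (auto simp: below_def)
  ultimately show ?thesis using False by simp
qed (simp add: root_not_in_branch)

lemma card_upper_ends:
  assumes XV: "X \<in> V" and wV: "w \<in> V"
  shows "card {f\<in>E. w \<in> branch f \<and> X \<in> f \<and> X \<notin> branch f} = (if X \<noteq> w \<and> below w X then 1 else 0)"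
proof (cases "X \<noteq> w \<and> below w X")
  case True
  then obtain f where f: "f \<in> E" "X \<in> f" "X \<notin> branch f" "w \<in> branch f"
    using child_exists XV wV by metis
  then have single: "{f\<in>E. w \<in> branch f \<and> X \<in> f \<and> X \<notin> branch f} = {f}"
    using child_unique by auto
  show ?thesis unfolding single using True by simp
next
  case False
  then have empty: "{f\<in>E. w \<in> branch f \<and> X \<in> f \<and> X \<notin> branch f} = {}"
    using child_below by blast
  show ?thesis unfolding empty using False by simp
qed

lemma OZ_deg_branch:
  "e \<in> E \<Longrightarrow> OZ_deg V E (branch e) X = (if X \<in> e then (if X \<in> branch e then -1 else 1) else 0)"
  by (simp add: OZ_deg_def tail_node_def crossing_branch)

lemma branch_telescope:
  assumes XV: "X \<in> V" and wV: "w \<in> V"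
  shows "(\<Sum>f\<in>{f\<in>E. w \<in> branch f}. OZ_deg V E (branch f) X)
       = (if X = r then 1 else 0) - (if X = w then 1 else 0)"
proof -
  have fin: "finite {f\<in>E. w \<in> branch f}" using finite_E by simp
  have "(\<Sum>f\<in>{f\<in>E. w \<in> branch f}. OZ_deg V E (branch f) X)
      = (\<Sum>f\<in>{f\<in>E. w \<in> branch f}. (if X \<in> f \<and> X \<notin> branch f then 1 else 0)
                                   - (if X \<in> f \<and> X \<in> branch f then 1 else 0 :: int))"
    by (rule sum.cong) (auto simp: OZ_deg_branch)
  also have "\<dots> = int (card {f\<in>E. w \<in> branch f \<and> X \<in> f \<and> X \<notin> branch f})
                - int (card {f\<in>E. w \<in> branch f \<and> X \<in> f \<and> X \<in> branch f})"
    by (simp add: sum_subtractf sum.inter_filter[OF fin, symmetric] conj_assoc)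
  also have "\<dots> = (if X \<noteq> w \<and> below w X then 1 else 0) - (if X \<noteq> r \<and> below w X then 1 else 0)"
    by (simp only: card_lower_ends[OF XV] card_upper_ends[OF XV wV] of_nat_1 of_nat_0 if_distrib[of int])
  also have "\<dots> = (if X = r then 1 else 0) - (if X = w then 1 else 0)"
  proof (cases "below w X")
    case False
    then have "X \<noteq> r" "X \<noteq> w" using below_refl[OF wV] by (auto simp: below_def)
    then show ?thesis using False by simp
  qed simp
  finally show ?thesis .
qed

lemma degree_from_branches:
  assumes XV: "X \<in> V"
  shows "(if X = r then degY d V else 0) - d X
       = (\<Sum>f\<in>E. OZ_deg V E (branch f) X * degY d (branch f))"
proof -
  have row: "OZ_deg V E (branch f) X * degY d (branch f)
      = (\<Sum>w\<in>V. if w \<in> branch f then d w * OZ_deg V E (branch f) X else 0)" for f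
  proof -
    have "degY d (branch f) = (\<Sum>w\<in>V. if w \<in> branch f then d w else 0)"
      using sum.inter_restrict[OF finite_V, of d "branch f"] branch_subset[of f]
      by (simp add: degY_def Int_absorb1)
    then show ?thesis by (auto simp: sum_distrib_left intro!: sum.cong)
  qed
  have "(\<Sum>f\<in>E. OZ_deg V E (branch f) X * degY d (branch f))
      = (\<Sum>w\<in>V. \<Sum>f\<in>E. if w \<in> branch f then d w * OZ_deg V E (branch f) X else 0)"
    by (simp only: row sum.swap[of _ E V])
  also have "\<dots> = (\<Sum>w\<in>V. d w * (\<Sum>f\<in>{f\<in>E. w \<in> branch f}. OZ_deg V E (branch f) X))"
    by (simp add: sum.inter_filter[OF finite_E, symmetric] sum_distrib_left)
  also have "\<dots> = (\<Sum>w\<in>V. (if X = r then d w else 0) - (if w = X then d w else 0))"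
    by (rule sum.cong) (auto simp: branch_telescope[OF XV] algebra_simps)
  also have "\<dots> = (if X = r then degY d V else 0) - d X"
    using XV finite_V by (simp add: sum_subtractf degY_def)
  finally show ?thesis by simp
qed

lemma tail_avoiding_root:
  assumes Z: "Z \<subseteq> V" "Z \<noteq> {}" "r \<notin> Z" and e: "e \<in> E" and cr: "crossing V E Z = {e}"
  shows "Z = branch e"
proof
  show Z_in: "Z \<subseteq> branch e"
  proof
    fix z assume z: "z \<in> Z"
    show "z \<in> branch e"
    proof (rule ccontr)
      assume "z \<notin> branch e"
      then have "reach (E - {e}) V z r" using z Z not_in_branch by auto
      then show False using tail_closed[OF cr _ z] Z(3) by blast
    qed
  qed
  show "branch e \<subseteq> Z"
  proof
    fix y assume y: "y \<in> branch e"
    obtain z where z: "z \<in> Z" using Z by auto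
    obtain x where x: "x \<in> e" "x \<in> branch e" using branch_node[OF e] by blast
    have "reach (E - {e}) V z x" using branch_reach_lower[OF e x] Z_in z by auto
    moreover have "reach (E - {e}) V x y" using reach_sym[OF branch_reach_lower[OF e x y]] .
    ultimately have "reach (E - {e}) V z y" by (rule reach_trans)
    then show "y \<in> Z" using tail_closed[OF cr _ z] by blast
  qed
qed

lemma tail_is_branch:
  assumes Z: "subcurve V Z" and e: "e \<in> E" and cr: "crossing V E Z = {e}"
  shows "Z = branch e \<or> Z = V - branch e"
proof (cases "r \<in> Z")
  case True
  have "V - Z = branch e"
  proof (rule tail_avoiding_root)
    show "crossing V E (V - Z) = {e}" using crossing_compl Z cr by (auto simp: subcurve_def)
  qed (use True Z e in \<open>auto simp: subcurve_def\<close>)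
  then show ?thesis using Z by (auto simp: subcurve_def)
next
  case False
  then show ?thesis using tail_avoiding_root[of Z e] Z e cr by (auto simp: subcurve_def)
qed

end

section \<open>Degrees of omega on a curve with principal component\<close>

definition deviation ::
  "'v set \<Rightarrow> 'v set set \<Rightarrow> ('v \<Rightarrow> nat) \<Rightarrow> ('v \<Rightarrow> int) \<Rightarrow> 'v set \<Rightarrow> real" where
  "deviation V E gen d Y = real_of_int (degY d Y)
     - real_of_int (degY d V) / real_of_int (2 * genusC V E gen - 2) * real_of_int (deg_omega V E gen Y)"

lemma semistable_iff:
  "semistable V E gen d \<longleftrightarrow>
     (\<forall>Y. subcurve V Y \<longrightarrow> \<bar>deviation V E gen d Y\<bar> \<le> real_of_int (kk V E Y) / 2)"
  by (simp add: semistable_def deviation_def)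

lemma quasistable_iff:
  "quasistable V E gen X d \<longleftrightarrow> semistable V E gen d \<and>
     (\<forall>Y. subcurve V Y \<and> X \<in> Y \<longrightarrow> deviation V E gen d Y > - real_of_int (kk V E Y) / 2)"
  by (simp add: quasistable_def deviation_def)

lemma ratio_bound:
  fixes w k D :: int
  assumes "D > 0" "0 \<le> w" "2 * w \<le> k * D"
  shows "0 \<le> real_of_int w / real_of_int D" "real_of_int w / real_of_int D \<le> real_of_int k / 2"
proof -
  have "real_of_int (2 * w) \<le> real_of_int (k * D)" using assms(3) by (simp only: of_int_le_iff)
  then have "2 * real_of_int w \<le> real_of_int k * real_of_int D" by simp
  then show "real_of_int w / real_of_int D \<le> real_of_int k / 2"
    using assms(1) by (simp add: divide_le_eq field_simps)
qed (use assms in simp)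

locale principal_ct = rooted_ct V E r for V :: "'v set" and E r +
  fixes gen :: "'v \<Rightarrow> nat"
  assumes stable_curve: "stable V E gen" and genus_ge2: "genusC V E gen \<ge> 2"
    and principal_root: "principal V E gen r"
begin

lemma omega_C_pos: "2 * genusC V E gen - 2 > 0"
  using genus_ge2 by simp

text \<open>deg omega on a branch is at most g - 1: the branch lies in a connected
  component W of the complement of the (semicentral) root, and W is a tail
  with 2 g_W \<le> g.\<close>
lemma branch_omega_le:
  assumes e: "e \<in> E"
  shows "deg_omega V E gen (branch e) \<le> genusC V E gen - 1"
proof -
  obtain x where x: "x \<in> e" "x \<in> branch e" using branch_node[OF e] by blast
  have xVr: "x \<in> V - {r}" using x branch_subset root_not_in_branch by blast
  define W where "W = {b \<in> V - {r}. reach E (V - {r}) x b}"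
  have W: "W \<in> conn_comps E (V - {r})" using xVr by (auto simp: conn_comps_def W_def)
  then have "2 * genus_sub E gen W \<le> genusC V E gen"
    using principal_root
    by (auto simp: principal_def central_def semicentral_def less_imp_le)
  moreover have "kk V E W \<le> 1"
    using component_attached_once[OF root_in W] by (simp add: kk_def)
  ultimately have "deg_omega V E gen W \<le> genusC V E gen - 1" by (simp add: deg_omega_def)
  moreover have "deg_omega V E gen (branch e) \<le> deg_omega V E gen W"
  proof (rule deg_omega_mono[OF stable_curve])
    show "branch e \<subseteq> W"
      using branch_connected[OF e x] branch_subset root_not_in_branch by (auto simp: W_def)
  qed (auto simp: W_def)
  ultimately show ?thesis by simp
qed

lemma kk_branch: "e \<in> E \<Longrightarrow> kk V E (branch e) = 1"
  by (simp add: kk_def crossing_branch)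

text \<open>On a subcurve Y avoiding the root, deg omega \<le> k_Y (g - 1): Y is covered
  by the k_Y branches at its boundary nodes, each contributing at most g - 1.\<close>
lemma omega_bound:
  assumes Y: "Y \<subseteq> V" and rY: "r \<notin> Y"
  shows "deg_omega V E gen Y \<le> kk V E Y * (genusC V E gen - 1)"
proof -
  define C where "C = crossing V E Y"
  define w where "w = omega_weight E gen"
  have w0: "0 \<le> w v" if "v \<in> V" for v
    using omega_weight_nonneg[OF stable_curve that] by (simp add: w_def)
  have "deg_omega V E gen Y = (\<Sum>v\<in>Y. w v)" using deg_omega_sum Y by (simp add: w_def)
  also have "\<dots> \<le> (\<Sum>v\<in>Y. \<Sum>f\<in>C. if v \<in> branch f then w v else 0)"
  proof (rule sum_mono)
    fix v assume v: "v \<in> Y"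
    obtain f0 where "f0 \<in> C" "v \<in> branch f0" using branch_cover[OF Y rY v] by (auto simp: C_def)
    then show "w v \<le> (\<Sum>f\<in>C. if v \<in> branch f then w v else 0)"
      using member_le_sum[of f0 C "\<lambda>f. if v \<in> branch f then w v else 0"]
        finite_crossing w0 v Y by (auto simp: C_def)
  qed
  also have "\<dots> = (\<Sum>f\<in>C. \<Sum>v\<in>Y. if v \<in> branch f then w v else 0)" by (rule sum.swap)
  also have "\<dots> \<le> (\<Sum>f\<in>C. genusC V E gen - 1)"
  proof (rule sum_mono)
    fix f assume f: "f \<in> C"
    have "(\<Sum>v\<in>Y. if v \<in> branch f then w v else 0) \<le> (\<Sum>v\<in>V. if v \<in> branch f then w v else 0)"
      by (rule sum_mono2) (use finite_V Y w0 in auto)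
    also have "\<dots> = (\<Sum>v\<in>branch f. w v)"
      using sum.inter_restrict[OF finite_V, of w "branch f"] branch_subset[of f]
      by (simp add: Int_absorb1 Int_commute)
    also have "\<dots> = deg_omega V E gen (branch f)" using deg_omega_sum branch_subset by (simp add: w_def)
    also have "\<dots> \<le> genusC V E gen - 1" using branch_omega_le f by (auto simp: C_def crossing_def)
    finally show "(\<Sum>v\<in>Y. if v \<in> branch f then w v else 0) \<le> genusC V E gen - 1" .
  qed
  also have "\<dots> = kk V E Y * (genusC V E gen - 1)" by (simp add: kk_def C_def)
  finally show ?thesis .
qed

lemma deviation_compl:
  assumes "Y \<subseteq> V"
  shows "deviation V E gen d (V - Y) = - deviation V E gen d Y"
proof -
  define D where "D = 2 * genusC V E gen - 2"
  have D: "real_of_int D \<noteq> 0" using omega_C_pos by (simp add: D_def)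
  have "degY d (V - Y) = degY d V - degY d Y"
    using sum_diff[OF finite_V assms] by (simp add: degY_def)
  moreover have "deg_omega V E gen (V - Y) = D - deg_omega V E gen Y"
    using deg_omega_compl[OF assms] by (simp add: D_def)
  ultimately have "deviation V E gen d (V - Y)
      = real_of_int (degY d V - degY d Y)
        - real_of_int (degY d V) / real_of_int D * real_of_int (D - deg_omega V E gen Y)"
    by (simp add: deviation_def D_def)
  also have "\<dots> = - deviation V E gen d Y"
    using D by (simp add: deviation_def D_def[symmetric] field_simps)
  finally show ?thesis .
qed

section \<open>The quasistable multidegree of total degree one\<close>

definition principal_deg :: "'v \<Rightarrow> int" where
  "principal_deg X = (if X = r then 1 else 0)"

lemma degY_principal_deg:
  assumes "Y \<subseteq> V" shows "degY principal_deg Y = (if r \<in> Y then 1 else 0)"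
proof -
  have "finite Y" using assms finite_V by (rule finite_subset)
  then show ?thesis by (simp add: degY_def principal_deg_def sum.delta)
qed

text \<open>On a subcurve avoiding the root, the deviation of e_1 is -deg(omega_Y)/(2g-2),
  which lies in [-k_Y/2, 0].\<close>
lemma principal_deg_deviation:
  assumes Y: "subcurve V Y" and rY: "r \<notin> Y"
  shows "- real_of_int (kk V E Y) / 2 \<le> deviation V E gen principal_deg Y"
    and "deviation V E gen principal_deg Y \<le> 0"
proof -
  have YV: "Y \<subseteq> V" using Y by (simp add: subcurve_def)
  have "2 * deg_omega V E gen Y \<le> kk V E Y * (2 * genusC V E gen - 2)"
    using omega_bound[OF YV rY] by (simp add: algebra_simps)
  note b = ratio_bound[OF omega_C_pos deg_omega_nonneg[OF stable_curve YV] this]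
  have "deviation V E gen principal_deg Y
      = - (real_of_int (deg_omega V E gen Y) / real_of_int (2 * genusC V E gen - 2))"
    using YV rY root_in by (simp add: deviation_def degY_principal_deg)
  then show "- real_of_int (kk V E Y) / 2 \<le> deviation V E gen principal_deg Y"
    "deviation V E gen principal_deg Y \<le> 0" using b by simp_all
qed

lemma principal_deg_quasistable: "quasistable V E gen r principal_deg"
proof -
  have bound: "\<bar>deviation V E gen principal_deg Y\<bar> \<le> real_of_int (kk V E Y) / 2 \<and>
      (r \<in> Y \<longrightarrow> deviation V E gen principal_deg Y > - real_of_int (kk V E Y) / 2)"
    if Y: "subcurve V Y" for Y
  proof (cases "r \<in> Y")
    case True
    have YV: "Y \<subseteq> V" using Y by (simp add: subcurve_def)
    have "subcurve V (V - Y)" using Y True by (auto simp: subcurve_def)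
    moreover have "kk V E (V - Y) = kk V E Y" using crossing_compl[OF YV] by (simp add: kk_def)
    moreover have "r \<notin> V - Y" using True by simp
    ultimately have "- real_of_int (kk V E Y) / 2 \<le> deviation V E gen principal_deg (V - Y)"
      "deviation V E gen principal_deg (V - Y) \<le> 0"
      using principal_deg_deviation[of "V - Y"] by simp_all
    then show ?thesis
      using deviation_compl[OF YV, of principal_deg] kk_pos[OF Y] True by auto
  next
    case False
    then show ?thesis using principal_deg_deviation[OF Y] by auto
  qed
  then show ?thesis by (simp add: quasistable_iff semistable_iff)
qed

text \<open>Quasistability with total degree one forces degree zero on every branch:
  its deviation lies in [-1/2, 1/2) while deg(omega) on it is at most g - 1.\<close>
lemma quasistable_branch_degree:
  assumes q: "quasistable V E gen r d" and dV: "degY d V = 1" and e: "e \<in> E"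
  shows "degY d (branch e) = 0"
proof -
  define c where "c = real_of_int (deg_omega V E gen (branch e)) / real_of_int (2 * genusC V E gen - 2)"
  have "2 * deg_omega V E gen (branch e) \<le> 1 * (2 * genusC V E gen - 2)"
    using branch_omega_le[OF e] by simp
  note bounds = ratio_bound[OF omega_C_pos deg_omega_nonneg[OF stable_curve branch_subset] this]
  have c: "0 \<le> c" "c \<le> 1 / 2" using bounds by (simp_all add: c_def)
  have dev: "deviation V E gen d (branch e) = real_of_int (degY d (branch e)) - c"
    using dV by (simp add: deviation_def c_def)
  have "\<bar>deviation V E gen d (branch e)\<bar> \<le> 1 / 2"
    using q branch_subcurve[OF e] kk_branch[OF e] by (auto simp: quasistable_iff semistable_iff)
  moreover have "deviation V E gen d (V - branch e) > - 1 / 2"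
    using q branch_compl_subcurve[OF e] root_in root_not_in_branch[of e]
      kk_branch[OF e] crossing_compl[OF branch_subset] by (auto simp: quasistable_iff kk_def)
  ultimately have "- 1 / 2 \<le> deviation V E gen d (branch e)" "deviation V E gen d (branch e) < 1 / 2"
    using deviation_compl[OF branch_subset, of d e] by (simp_all add: abs_le_iff)
  then have "-1 < real_of_int (degY d (branch e))" "real_of_int (degY d (branch e)) < 1"
    using c dev by linarith+
  then show ?thesis by simp
qed

lemma quasistable_unique:
  assumes q: "quasistable V E gen r d" and dV: "degY d V = 1" and XV: "X \<in> V"
  shows "d X = principal_deg X"
proof -
  have "(\<Sum>f\<in>E. OZ_deg V E (branch f) X * degY d (branch f)) = 0"
    by (rule sum.neutral) (simp add: quasistable_branch_degree[OF q dV])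
  then show ?thesis
    using degree_from_branches[OF XV, of d] dV by (cases "X = r") (simp_all add: principal_deg_def)
qed

lemma quasistable_cong:
  assumes "\<forall>X\<in>V. d X = d' X"
  shows "quasistable V E gen r d \<longleftrightarrow> quasistable V E gen r d'"
proof -
  have "Y \<subseteq> V \<Longrightarrow> degY d Y = degY d' Y" for Y
    using assms by (auto simp: degY_def intro!: sum.cong)
  then show ?thesis
    unfolding quasistable_def semistable_def subcurve_def by (simp cong: conj_cong)
qed

section \<open>The first Abel map\<close>

text \<open>The small tails are exactly the branches: a branch has 2 g \<le> g_C with
  the root outside, while the complement of a branch is not small.\<close>
lemma small_tail_iff_branch: "small_tail V E gen r Z \<longleftrightarrow> (\<exists>e\<in>E. Z = branch e)"
proof
  assume sm: "small_tail V E gen r Z"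
  then have Z: "subcurve V Z" and k: "kk V E Z = 1" by (auto simp: small_tail_def tail_def)
  then obtain e where cr: "crossing V E Z = {e}" by (auto simp: kk_def card_1_singleton_iff)
  then have e: "e \<in> E" by (auto simp: crossing_def)
  have "Z \<noteq> V - branch e"
  proof
    assume ZV: "Z = V - branch e"
    then have "deg_omega V E gen Z \<ge> genusC V E gen - 1"
      using deg_omega_compl[OF branch_subset] branch_omega_le[OF e] by simp
    then have "2 * genus_sub E gen Z \<ge> genusC V E gen" using k by (simp add: deg_omega_def)
    moreover have "r \<notin> V - Z" using ZV root_in root_not_in_branch[of e] by auto
    ultimately show False using sm by (auto simp: small_tail_def)
  qed
  then show "\<exists>e\<in>E. Z = branch e" using tail_is_branch[OF Z e cr] e by auto
next
  assume "\<exists>e\<in>E. Z = branch e"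
  then obtain e where e: "e \<in> E" and Z: "Z = branch e" by blast
  have "2 * genus_sub E gen (branch e) \<le> genusC V E gen"
    using branch_omega_le[OF e] kk_branch[OF e] by (simp add: deg_omega_def)
  then show "small_tail V E gen r Z"
    using Z branch_subcurve[OF e] kk_branch[OF e] root_in root_not_in_branch
    by (auto simp: small_tail_def tail_def)
qed

lemma small_tail_at_node:
  assumes e: "e \<in> E"
  shows "(THE Z. small_tail V E gen r Z \<and> crossing V E Z = {e}) = branch e"
proof (rule the_equality)
  show "small_tail V E gen r (branch e) \<and> crossing V E (branch e) = {e}"
    using small_tail_iff_branch e crossing_branch by auto
  fix Z assume Z: "small_tail V E gen r Z \<and> crossing V E Z = {e}"
  then obtain f where f: "f \<in> E" "Z = branch f" using small_tail_iff_branch by auto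
  then have "f = e" using Z crossing_branch by auto
  then show "Z = branch e" using f by simp
qed

lemma abel_at_component:
  assumes vV: "v \<in> V" and XV: "X \<in> V"
  shows "(if X = v then 1 else 0) + (\<Sum>Z\<in>branch ` {f\<in>E. v \<in> branch f}. OZ_deg V E Z X)
       = principal_deg X"
proof -
  have "inj_on branch {f\<in>E. v \<in> branch f}" using branch_inj by (auto simp: inj_on_def)
  then show ?thesis
    using branch_telescope[OF XV vV] by (simp add: sum.reindex principal_deg_def)
qed

lemma abel_smooth:
  assumes vV: "v \<in> V" and XV: "X \<in> V"
  shows "abel1_deg V E gen r (Smooth v) X = principal_deg X"
proof -
  have "{Z. small_tail V E gen r Z \<and> point_on (Smooth v) Z} = branch ` {f\<in>E. v \<in> branch f}"
    by (auto simp: small_tail_iff_branch point_on_def)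
  then show ?thesis
    using abel_at_component[OF vV XV] by (simp add: abel1_deg_def N_deg_def)
qed

text \<open>At a node e with lower end x, N_q is e_x and the small tails through
  the node are those containing x, so the same computation applies.\<close>
lemma abel_node:
  assumes e: "e \<in> E" and XV: "X \<in> V"
  shows "abel1_deg V E gen r (NodeP e) X = principal_deg X"
proof -
  obtain x y where xy: "e = {x, y}" "x \<noteq> y" "x \<in> branch e" "y \<notin> branch e"
    using branch_node[OF e] by blast
  have xV: "x \<in> V" using xy branch_subset by auto
  have "(X \<in> e \<and> X \<in> branch e) = (X = x)" using xy by auto
  then have N: "N_deg V E gen r (NodeP e) X = (if X = x then 1 else 0)"
    by (simp add: N_deg_def small_tail_at_node[OF e] Let_def)
  have through_node: "x \<in> branch f" if f: "f \<in> E" "e \<inter> branch f \<noteq> {}" for f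
  proof (rule ccontr)
    assume x_out: "x \<notin> branch f"
    then have "y \<in> branch f" "f \<noteq> e" using f xy by auto
    then have "x \<in> branch f" using branch_closed_edge[of y f x] e xy by (simp add: insert_commute)
    then show False using x_out by simp
  qed
  have "{Z. small_tail V E gen r Z \<and> point_on (NodeP e) Z} = branch ` {f\<in>E. x \<in> branch f}"
  proof (rule set_eqI, rule iffI)
    fix Z assume "Z \<in> {Z. small_tail V E gen r Z \<and> point_on (NodeP e) Z}"
    then obtain f where "f \<in> E" "Z = branch f" "e \<inter> branch f \<noteq> {}"
      by (auto simp: small_tail_iff_branch point_on_def)
    then show "Z \<in> branch ` {f\<in>E. x \<in> branch f}" using through_node by auto
  next
    fix Z assume "Z \<in> branch ` {f\<in>E. x \<in> branch f}"
    then show "Z \<in> {Z. small_tail V E gen r Z \<and> point_on (NodeP e) Z}"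
      using xy by (auto simp: small_tail_iff_branch point_on_def)
  qed
  then show ?thesis using abel_at_component[OF xV XV] by (simp add: abel1_deg_def N)
qed

end

theorem mainTheorem2:
  fixes V :: "'v set" and E :: "'v set set" and gen :: "'v \<Rightarrow> nat" and Xpr :: 'v
  assumes "compact_type V E"
    and "stable V E gen"
    and "genusC V E gen \<ge> 2"
    and "Xpr \<in> V"
    and "principal V E gen Xpr"
  defines "e1 \<equiv> (\<lambda>X. if X = Xpr then 1 else 0 :: int)"
  shows "(\<forall>d :: 'v \<Rightarrow> int. (quasistable V E gen Xpr d \<and> degY d V = 1)
              \<longleftrightarrow> (\<forall>X\<in>V. d X = e1 X))
         \<and> semistable V E gen e1
         \<and> (\<forall>q. valid_point V E q \<longrightarrow> (\<forall>X\<in>V. abel1_deg V E gen Xpr q X = e1 X))"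
proof -
  interpret principal_ct V E Xpr gen
    by unfold_locales (rule assms)+
  have e1: "e1 = principal_deg" by (rule ext) (simp add: e1_def principal_deg_def)
  have total: "degY e1 V = 1" using degY_principal_deg[of V] root_in e1 by simp
  have "quasistable V E gen Xpr d \<and> degY d V = 1 \<longleftrightarrow> (\<forall>X\<in>V. d X = e1 X)" for d
  proof
    assume "quasistable V E gen Xpr d \<and> degY d V = 1"
    then show "\<forall>X\<in>V. d X = e1 X" using quasistable_unique e1 by blast
  next
    assume same: "\<forall>X\<in>V. d X = e1 X"
    then have "degY d V = 1" using total by (simp add: degY_def)
    moreover have "quasistable V E gen Xpr d"
      using quasistable_cong[OF same] principal_deg_quasistable e1 by simp
    ultimately show "quasistable V E gen Xpr d \<and> degY d V = 1" by simp
  qed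
  moreover have "semistable V E gen e1"
    using principal_deg_quasistable e1 by (simp add: quasistable_def)
  moreover have "abel1_deg V E gen Xpr q X = e1 X" if "valid_point V E q" "X \<in> V" for q X
    using that abel_smooth abel_node e1 by (cases q) (auto simp: valid_point_def)
  ultimately show ?thesis by blast
qed

end
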